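(* Consider the single-hop VAoI system described in the context, operated under the threshold policy with threshold $\Delta_T\in\{0,1,2,\dots\}$, and let $\beta=1-(1-p_s)(1-p_g)$. If $\Delta_T\in\{0,1\}$, the steady-state probabilities of the VAoI are the same as under the randomized stationary policy with transmission probability $1$, namely $\mu_0=\frac{p_s(1-p_g)}{\beta}$, $\mu_1=\frac{p_sp_g}{\beta^2}$, and $\mu_n=\left[\frac{(1-p_s)p_g}{\beta}\right]^{n-1}\mu_1$ for $n\ge2$. If $\Delta_T\ge2$, \[ \mu_n=\begin{cases}\dfrac{p_s(1-p_g)}{(\Delta_T-1)p_s+\beta}, & n=0,\\[2mm] \dfrac{p_s}{(\Delta_T-1)p_s+\beta}, & 1\le n\le\Delta_T-1,\\[2mm] \dfrac{p_g}{\beta}\mu_{\Delta_T-1}, & n=\Delta_T,\\[2mm] \left[\dfrac{(1-p_s)p_g}{\beta}\right]^{n-\Delta_T}\mu_{\Delta_T}, & n\ge\Delta_T+1.\end{cases} \]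
   Context: Time is slotted, $t\in\{0,1,2,\dots\}$. An information source generates a new version in each slot independently with probability $p_g$; let $G_t\in\{0,1\}$ indicate whether a new version is generated in slot $t$. A transmitter holding the current source version may, in each slot $t$, attempt to send it to a receiver over an erasure channel; $a(t)\in\{0,1\}$ indicates an attempt, and each attempt succeeds independently with probability $p_s$. The Version Age of Information (VAoI) $\Delta(t)$ (number of versions by which the receiver lags the source) evolves as $\Delta(t+1)=G_t$ if $a(t)=1$ and the attempt succeeds, and $\Delta(t+1)=\Delta(t)+G_t$ otherwise. All version-generation and channel events are mutually independent. Assume $0<p_s<1$, $0<p_g<1$. The threshold policy with threshold $\Delta_T$ sets $a(t)=1$ if $\Delta(t)\ge\Delta_T$ and $a(t)=0$ otherwise; $\Delta(t)$ is then an ergodic Markov chain and $\mu_n$ is its stationary probability of state $n$. *)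

theory Defs
  imports Complex_Main
begin

text \<open>One-slot dynamics: attempt a, channel outcome s (success), generation g.\<close>
definition vaoi_next :: "bool \<Rightarrow> bool \<Rightarrow> nat \<Rightarrow> nat \<Rightarrow> nat" where
  "vaoi_next a s g n = (if a \<and> s then g else n + g)"

definition threshold_action :: "nat \<Rightarrow> nat \<Rightarrow> bool" where
  "threshold_action DT n = (DT \<le> n)"

definition vaoi_trans :: "real \<Rightarrow> real \<Rightarrow> nat \<Rightarrow> nat \<Rightarrow> nat \<Rightarrow> real" where
  "vaoi_trans ps pg DT n m =
     (\<Sum>s\<in>{True, False}. \<Sum>g\<in>{0::nat, 1}.
        (if s then ps else 1 - ps) * (if g = 1 then pg else 1 - pg) *
        (if vaoi_next (threshold_action DT n) s g n = m then 1 else 0))"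

definition is_stationary :: "real \<Rightarrow> real \<Rightarrow> nat \<Rightarrow> (nat \<Rightarrow> real) \<Rightarrow> bool" where
  "is_stationary ps pg DT \<mu> \<longleftrightarrow>
     (\<forall>n. 0 \<le> \<mu> n) \<and> \<mu> sums 1 \<and>
     (\<forall>m. (\<lambda>n. \<mu> n * vaoi_trans ps pg DT n m) sums \<mu> m)"

end

theory Submission
  imports Defs
begin

(* Given total mass 1, the global balance equations reduce to a local recurrence: state m gets the
   reset mass (ps(1-pg) into 0, ps pg into 1) from the states at or above the threshold, whose total
   is 1 minus the mass below it, plus its self-loop and the step up from m - 1.  This recurrence has
   at most one solution: the difference d of two solutions satisfies its homogeneous version with
   feedback - (sum of d below the threshold), a nonnegative feedback makes all d n nonnegative by
   induction, and this forces the feedback and then d itself to vanish.  It remains to check that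
   the explicit law (flat on 1..DT-1, geometric with ratio (1-ps)pg/beta from DT on) is a
   probability distribution solving the recurrence.  Thresholds 0 and 1 define the same chain. *)

definition reset_prob :: "real \<Rightarrow> real \<Rightarrow> nat \<Rightarrow> real" where
  "reset_prob ps pg m = (if m = 0 then ps * (1 - pg) else if m = 1 then ps * pg else 0)"

definition stay_prob :: "real \<Rightarrow> real \<Rightarrow> nat \<Rightarrow> nat \<Rightarrow> real" where
  "stay_prob ps pg DT n = (if DT \<le> n then (1 - ps) * (1 - pg) else 1 - pg)"

definition incr_prob :: "real \<Rightarrow> real \<Rightarrow> nat \<Rightarrow> nat \<Rightarrow> real" where
  "incr_prob ps pg DT n = (if DT \<le> n then (1 - ps) * pg else pg)"

lemma vaoi_trans_eq:
  "vaoi_trans ps pg DT n m =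
     (if DT \<le> n then reset_prob ps pg m else 0) +
     (if m = n then stay_prob ps pg DT n else 0) +
     (if m = Suc n then incr_prob ps pg DT n else 0)"
  unfolding vaoi_trans_def vaoi_next_def threshold_action_def reset_prob_def stay_prob_def
    incr_prob_def
  by (auto simp: algebra_simps)

lemma vaoi_trans_threshold_0_eq_1: "vaoi_trans ps pg 0 = vaoi_trans ps pg 1"
  by (intro ext)
    (auto simp: vaoi_trans_eq reset_prob_def stay_prob_def incr_prob_def algebra_simps)

definition vaoi_inflow :: "real \<Rightarrow> real \<Rightarrow> nat \<Rightarrow> (nat \<Rightarrow> real) \<Rightarrow> nat \<Rightarrow> real" where
  "vaoi_inflow ps pg DT \<mu> m =
     reset_prob ps pg m * (1 - (\<Sum>n<DT. \<mu> n)) + stay_prob ps pg DT m * \<mu> m +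
     (case m of 0 \<Rightarrow> 0 | Suc k \<Rightarrow> incr_prob ps pg DT k * \<mu> k)"

lemma sums_tail:
  fixes \<mu> :: "nat \<Rightarrow> real"
  assumes "\<mu> sums s"
  shows "(\<lambda>n. if N \<le> n then \<mu> n else 0) sums (s - (\<Sum>n<N. \<mu> n))"
proof -
  have "(\<lambda>n. if n \<in> {..<N} then \<mu> n else 0) sums (\<Sum>n<N. \<mu> n)"
    by (rule sums_If_finite_set) simp
  from sums_diff[OF assms this] show ?thesis
    by (rule back_subst[where P = "\<lambda>f. f sums _"]) auto
qed

lemma sums_vaoi_inflow:
  assumes "\<mu> sums 1"
  shows "(\<lambda>n. \<mu> n * vaoi_trans ps pg DT n m) sums vaoi_inflow ps pg DT \<mu> m"
proof -
  have resets: "(\<lambda>n. reset_prob ps pg m * (if DT \<le> n then \<mu> n else 0))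
      sums (reset_prob ps pg m * (1 - (\<Sum>n<DT. \<mu> n)))"
    by (intro sums_mult sums_tail assms)
  have stays: "(\<lambda>n. if n = m then stay_prob ps pg DT n * \<mu> n else 0)
      sums (stay_prob ps pg DT m * \<mu> m)"
    by (rule sums_single)
  have incrs: "(\<lambda>n. if Suc n = m then incr_prob ps pg DT n * \<mu> n else 0)
      sums (case m of 0 \<Rightarrow> 0 | Suc k \<Rightarrow> incr_prob ps pg DT k * \<mu> k)"
    using sums_single[of "m - 1" "\<lambda>n. incr_prob ps pg DT n * \<mu> n"] by (cases m) auto
  have "\<mu> n * vaoi_trans ps pg DT n m =
      reset_prob ps pg m * (if DT \<le> n then \<mu> n else 0) +
      (if n = m then stay_prob ps pg DT n * \<mu> n else 0) +
      (if Suc n = m then incr_prob ps pg DT n * \<mu> n else 0)" for n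
    by (auto simp: vaoi_trans_eq distrib_left mult.commute)
  then show ?thesis
    using sums_add[OF sums_add[OF resets stays] incrs] by (simp add: vaoi_inflow_def)
qed

lemma is_stationary_iff_balance:
  "is_stationary ps pg DT \<mu> \<longleftrightarrow>
     (\<forall>n. 0 \<le> \<mu> n) \<and> \<mu> sums 1 \<and> (\<forall>m. \<mu> m = vaoi_inflow ps pg DT \<mu> m)"
proof -
  have "(\<lambda>n. \<mu> n * vaoi_trans ps pg DT n m) sums \<mu> m \<longleftrightarrow> \<mu> m = vaoi_inflow ps pg DT \<mu> m"
    if "\<mu> sums 1" for m
    using sums_unique2[OF _ sums_vaoi_inflow[OF that]] sums_vaoi_inflow[OF that] by auto
  then show ?thesis
    unfolding is_stationary_def by blast
qed

lemma balance_recurrence_nonneg: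
  fixes d R s g :: "nat \<Rightarrow> real" and t :: real
  assumes R: "\<And>m. 0 \<le> R m" and s: "\<And>m. s m < 1" and g: "\<And>k. 0 \<le> g k" and t: "0 \<le> t"
    and eq: "\<And>m. d m = R m * t + s m * d m + (case m of 0 \<Rightarrow> 0 | Suc k \<Rightarrow> g k * d k)"
  shows "0 \<le> d m"
proof -
  have step: "0 \<le> d m" if "0 \<le> (case m of 0 \<Rightarrow> 0 | Suc k \<Rightarrow> g k * d k)" for m
  proof -
    have "(1 - s m) * d m = R m * t + (case m of 0 \<Rightarrow> 0 | Suc k \<Rightarrow> g k * d k)"
      using eq[of m] by (simp add: algebra_simps)
    also have "\<dots> \<ge> 0"
      using R t that by simp
    finally show ?thesis
      using s[of m] by (simp add: zero_le_mult_iff)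
  qed
  show ?thesis
  proof (induction m)
    case 0
    show ?case by (rule step) simp
  next
    case (Suc k)
    show ?case by (rule step) (simp add: g Suc)
  qed
qed

lemma homogeneous_balance_eq_0:
  fixes d R s g :: "nat \<Rightarrow> real"
  assumes R: "\<And>m. 0 \<le> R m" and s: "\<And>m. s m < 1" and g: "\<And>k. 0 \<le> g k"
    and eq: "\<And>m. d m = R m * - (\<Sum>n<N. d n) + s m * d m
                      + (case m of 0 \<Rightarrow> 0 | Suc k \<Rightarrow> g k * d k)"
  shows "d m = 0"
proof -
  have nonneg: "0 \<le> e m"
    if "\<And>m. e m = R m * - (\<Sum>n<N. e n) + s m * e m
                  + (case m of 0 \<Rightarrow> 0 | Suc k \<Rightarrow> g k * e k)"
      and "(\<Sum>n<N. e n) \<le> 0" for e :: "nat \<Rightarrow> real" and m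
    by (rule balance_recurrence_nonneg[OF R s g _ that(1)]) (use that(2) in simp)
  have eq_neg_d: "- d m = R m * - (\<Sum>n<N. - d n) + s m * - d m
      + (case m of 0 \<Rightarrow> 0 | Suc k \<Rightarrow> g k * - d k)" for m
    using eq[of m] by (cases m; simp add: sum_negf; linarith)
  \<comment> \<open>A nonnegative feedback makes the solution, hence its mass below N, nonnegative;
    apply this to d and to -d.\<close>
  have "(\<Sum>n<N. d n) = 0"
  proof (cases "(\<Sum>n<N. d n) \<le> 0")
    case True
    then show ?thesis
      using nonneg[OF eq] by (simp add: antisym sum_nonneg)
  next
    case False
    then show ?thesis
      using nonneg[OF eq_neg_d] sum_nonneg[of "{..<N}" "\<lambda>n. - d n"] by (simp add: sum_negf)
  qed
  then show ?thesis
    using nonneg[OF eq, of m] nonneg[OF eq_neg_d, of m] by (simp add: sum_negf)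
qed

lemma vaoi_balance_unique:
  assumes "0 \<le> ps" "ps \<le> 1" "0 < pg" "pg \<le> 1"
    and \<mu>: "\<And>m. \<mu> m = vaoi_inflow ps pg DT \<mu> m" and \<nu>: "\<And>m. \<nu> m = vaoi_inflow ps pg DT \<nu> m"
  shows "\<mu> = \<nu>"
proof -
  have "(\<mu> - \<nu>) m = 0" for m
  proof (rule homogeneous_balance_eq_0)
    show "0 \<le> reset_prob ps pg m" for m
      using assms(1-4) by (simp add: reset_prob_def)
    show "stay_prob ps pg DT m < 1" for m
      using assms(1-4) mult_right_mono[of "1 - ps" 1 "1 - pg"]
      by (auto simp: stay_prob_def)
    show "0 \<le> incr_prob ps pg DT k" for k
      using assms(1-4) by (simp add: incr_prob_def)
    show "(\<mu> - \<nu>) m = reset_prob ps pg m * - (\<Sum>n<DT. (\<mu> - \<nu>) n)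
        + stay_prob ps pg DT m * (\<mu> - \<nu>) m
        + (case m of 0 \<Rightarrow> 0 | Suc k \<Rightarrow> incr_prob ps pg DT k * (\<mu> - \<nu>) k)" for m
      using \<mu>[of m] \<nu>[of m]
      by (cases m; simp add: vaoi_inflow_def sum_subtractf algebra_simps; linarith)
  qed
  then show ?thesis by auto
qed

definition threshold_stationary_dist :: "real \<Rightarrow> real \<Rightarrow> nat \<Rightarrow> nat \<Rightarrow> real" where
  "threshold_stationary_dist ps pg DT n =
     (let \<beta> = 1 - (1 - ps) * (1 - pg); c = ps / ((real DT - 1) * ps + \<beta>)
      in if n = 0 then (1 - pg) * c
         else if n < DT then c
         else ((1 - ps) * pg / \<beta>) ^ (n - DT) * (pg / \<beta> * c))"

locale vaoi_threshold =
  fixes ps pg :: real and DT :: nat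
  assumes ps: "0 < ps" "ps < 1" and pg: "0 < pg" "pg < 1" and DT: "1 \<le> DT"
begin

definition \<beta> :: real where "\<beta> = 1 - (1 - ps) * (1 - pg)"
definition plateau :: real where "plateau = ps / ((real DT - 1) * ps + \<beta>)"
definition ratio :: real where "ratio = (1 - ps) * pg / \<beta>"

abbreviation \<pi> :: "nat \<Rightarrow> real" where "\<pi> \<equiv> threshold_stationary_dist ps pg DT"

lemma beta_eq: "\<beta> = ps + (1 - ps) * pg"
  by (simp add: \<beta>_def algebra_simps)

lemma beta_pos: "0 < \<beta>"
  using ps pg by (simp add: beta_eq add_pos_nonneg)

lemma plateau_denom_pos: "0 < (real DT - 1) * ps + \<beta>"
  using ps DT beta_pos by (simp add: add_nonneg_pos)

lemma plateau_pos: "0 < plateau"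
  using ps plateau_denom_pos by (simp add: plateau_def)

lemma plateau_eq: "plateau * ((real DT - 1) * ps + \<beta>) = ps"
  using plateau_denom_pos by (simp add: plateau_def)

lemma beta_mult_ratio: "\<beta> * ratio = (1 - ps) * pg"
  using beta_pos by (simp add: ratio_def)

lemma ratio_nonneg: "0 \<le> ratio"
  using ps pg beta_pos by (simp add: ratio_def)

lemma beta_mult_one_minus_ratio: "\<beta> * (1 - ratio) = ps"
  using beta_mult_ratio by (simp add: beta_eq algebra_simps)

lemma ratio_less_1: "ratio < 1"
proof -
  have "0 < \<beta> * (1 - ratio)"
    using beta_mult_one_minus_ratio ps by simp
  then show ?thesis
    using beta_pos by (simp add: zero_less_mult_iff)
qed

lemma dist_eq:
  "\<pi> n = (if n = 0 then (1 - pg) * plateau else if n < DT then plateau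
          else ratio ^ (n - DT) * (pg / \<beta> * plateau))"
  by (simp add: threshold_stationary_dist_def Let_def \<beta>_def plateau_def ratio_def)

lemma dist_nonneg: "0 \<le> \<pi> n"
  using pg plateau_pos ratio_nonneg beta_pos by (simp add: dist_eq)

lemma tail_mass: "1 - (\<Sum>n<DT. \<pi> n) = pg * plateau / ps"
proof -
  obtain k where k: "Suc k = DT"
    using DT by (cases DT) auto
  have "(\<Sum>n<DT. \<pi> n) = \<pi> 0 + (\<Sum>i<k. \<pi> (Suc i))"
    unfolding k[symmetric] sum.lessThan_Suc_shift ..
  also have "(\<Sum>i<k. \<pi> (Suc i)) = (\<Sum>i<k. plateau)"
    by (rule sum.cong) (use k in \<open>auto simp: dist_eq\<close>)
  also have "\<pi> 0 = (1 - pg) * plateau"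
    by (simp add: dist_eq)
  finally have "(\<Sum>n<DT. \<pi> n) = (real DT - pg) * plateau"
    by (simp add: algebra_simps flip: k)
  then have "ps * (1 - (\<Sum>n<DT. \<pi> n)) = pg * plateau"
    using plateau_eq beta_eq by algebra
  then show ?thesis
    using ps by (simp add: field_simps)
qed

lemma dist_sums: "\<pi> sums 1"
proof -
  have "(\<lambda>i. \<pi> (i + DT)) = (\<lambda>i. ratio ^ i * (pg / \<beta> * plateau))"
    using DT by (simp add: dist_eq)
  moreover have
    "(\<lambda>i. ratio ^ i * (pg / \<beta> * plateau)) sums (1 / (1 - ratio) * (pg / \<beta> * plateau))"
    using ratio_nonneg ratio_less_1 by (intro sums_mult2 geometric_sums) simp
  moreover have "1 / (1 - ratio) * (pg / \<beta> * plateau) = 1 - (\<Sum>n<DT. \<pi> n)"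
    using beta_mult_one_minus_ratio beta_pos by (simp add: tail_mass mult.commute)
  ultimately have "(\<lambda>i. \<pi> (i + DT)) sums (1 - (\<Sum>n<DT. \<pi> n))"
    by simp
  then show ?thesis
    by (simp add: sums_iff_shift)
qed

lemma dist_balance: "\<pi> m = vaoi_inflow ps pg DT \<pi> m"
proof -
  have inflow: "vaoi_inflow ps pg DT \<pi> m = stay_prob ps pg DT m * \<pi> m +
      (reset_prob ps pg m * (pg * plateau / ps)
       + (case m of 0 \<Rightarrow> 0 | Suc k \<Rightarrow> incr_prob ps pg DT k * \<pi> k))"
    by (simp add: vaoi_inflow_def tail_mass)
  consider "m = 0" | "1 \<le> m" "m \<le> DT" | "DT < m"
    by linarith
  then show ?thesis
  proof cases
    case 1
    then show ?thesis
      using DT ps unfolding inflow by (simp add: dist_eq stay_prob_def reset_prob_def field_simps)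
  next
    case 2
    have "reset_prob ps pg m * (pg * plateau / ps)
        + (case m of 0 \<Rightarrow> 0 | Suc k \<Rightarrow> incr_prob ps pg DT k * \<pi> k) = pg * plateau"
      using 2 DT ps
      by (cases "m = 1") (auto simp: reset_prob_def incr_prob_def dist_eq algebra_simps split: nat.split)
    moreover have "(1 - stay_prob ps pg DT m) * \<pi> m = pg * plateau"
      using 2 beta_pos by (cases "m = DT") (auto simp: stay_prob_def dist_eq \<beta>_def)
    ultimately show ?thesis
      unfolding inflow by (simp add: algebra_simps)
  next
    case 3
    then obtain k where k: "m = Suc k" "DT \<le> k"
      by (cases m) auto
    have "\<pi> m = ratio * \<pi> k"
      using k DT by (simp add: dist_eq Suc_diff_le)
    then have "\<beta> * \<pi> m = (1 - ps) * pg * \<pi> k"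
      by (simp add: beta_mult_ratio flip: mult.assoc)
    then have "(1 - stay_prob ps pg DT m) * \<pi> m = incr_prob ps pg DT k * \<pi> k"
      using k by (simp add: stay_prob_def incr_prob_def \<beta>_def)
    then show ?thesis
      using k DT unfolding inflow by (simp add: reset_prob_def algebra_simps)
  qed
qed

lemma is_stationary_dist: "is_stationary ps pg DT \<pi>"
  using dist_nonneg dist_sums dist_balance by (simp add: is_stationary_iff_balance)

lemma is_stationary_iff_eq_dist: "is_stationary ps pg DT \<mu> \<longleftrightarrow> \<mu> = \<pi>"
proof
  assume "is_stationary ps pg DT \<mu>"
  then show "\<mu> = \<pi>"
    using ps pg dist_balance
    by (intro vaoi_balance_unique) (auto simp: is_stationary_iff_balance)
qed (simp add: is_stationary_dist)

end

theorem proposition3: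
  fixes ps pg :: real and DT :: nat and \<mu> :: "nat \<Rightarrow> real"
  assumes "0 < ps" "ps < 1" "0 < pg" "pg < 1"
  defines "\<beta> \<equiv> 1 - (1 - ps) * (1 - pg)"
  shows "is_stationary ps pg DT \<mu> \<longleftrightarrow>
    (if DT \<le> 1 then
       (\<forall>n. \<mu> n = (if n = 0 then ps * (1 - pg) / \<beta>
                   else if n = 1 then ps * pg / \<beta>\<^sup>2
                   else ((1 - ps) * pg / \<beta>) ^ (n - 1) * (ps * pg / \<beta>\<^sup>2)))
     else
       (\<forall>n. \<mu> n = (if n = 0 then ps * (1 - pg) / ((real DT - 1) * ps + \<beta>)
                   else if n \<le> DT - 1 then ps / ((real DT - 1) * ps + \<beta>)
                   else if n = DT then pg / \<beta> * (ps / ((real DT - 1) * ps + \<beta>))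
                   else ((1 - ps) * pg / \<beta>) ^ (n - DT) *
                          (pg / \<beta> * (ps / ((real DT - 1) * ps + \<beta>))))))"
proof -
  have stationary_iff:
    "is_stationary ps pg D \<mu> \<longleftrightarrow> (\<forall>n. \<mu> n = threshold_stationary_dist ps pg D n)" if "1 \<le> D" for D
    using assms(1-4) that vaoi_threshold.is_stationary_iff_eq_dist[of ps pg D \<mu>]
    by (simp add: vaoi_threshold_def fun_eq_iff)
  show ?thesis
  proof (cases "DT \<le> 1")
    case True
    have "threshold_stationary_dist ps pg 1 n =
        (if n = 0 then ps * (1 - pg) / \<beta> else if n = 1 then ps * pg / \<beta>\<^sup>2
         else ((1 - ps) * pg / \<beta>) ^ (n - 1) * (ps * pg / \<beta>\<^sup>2))" for n
      unfolding threshold_stationary_dist_def Let_def \<beta>_def[symmetric]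
      by (simp add: power2_eq_square)
    moreover have "is_stationary ps pg DT \<mu> \<longleftrightarrow> is_stationary ps pg 1 \<mu>"
      using True vaoi_trans_threshold_0_eq_1 by (cases DT) (auto simp: is_stationary_def)
    ultimately show ?thesis
      using True by (simp add: stationary_iff)
  next
    case False
    have "threshold_stationary_dist ps pg DT n =
        (if n = 0 then ps * (1 - pg) / ((real DT - 1) * ps + \<beta>)
         else if n \<le> DT - 1 then ps / ((real DT - 1) * ps + \<beta>)
         else if n = DT then pg / \<beta> * (ps / ((real DT - 1) * ps + \<beta>))
         else ((1 - ps) * pg / \<beta>) ^ (n - DT) * (pg / \<beta> * (ps / ((real DT - 1) * ps + \<beta>))))" for n
      unfolding threshold_stationary_dist_def Let_def \<beta>_def[symmetric]
      using False by auto
    then show ?thesis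
      using False by (simp add: stationary_iff)
  qed
qed

end
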